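(* Consider Generalized FTPL with a $(\kappa,\delta)$-admissible translation matrix $\Gamma\in[0,1]^{|\mathcal X|\times N}$, accuracy $\epsilon\ge0$, and a $\big(\rho,\frac{1+2\epsilon}{\delta}\big)$-dispersed distribution $D$. Then \[ \mathbb{E}\Big[\sum_{t=1}^T f(x_{t+1},y_t)-f(x_t,y_t)\Big]\le 2TN\kappa\rho . \]
   Context: Online learning setting: $\mathcal X$ finite set of learner actions, $\mathcal Y$ set of adversary actions, $f:\mathcal X\times\mathcal Y\to[0,1]$; adversary sequence $y_1,\dots,y_T$ fixed in advance. Generalized FTPL with parameters $(\Gamma,D,\epsilon)$: draw $\alpha_1,\dots,\alpha_N$ i.i.d. from $D$ once; for each $t=1,\dots,T+1$, $x_t$ is any action (a function of $\vec\alpha$ and $y_1,\dots,y_{t-1}$) with $\sum_{\tau<t}f(x_t,y_\tau)+\vec\alpha\cdot\Gamma_{x_t}\ge\sum_{\tau<t}f(x,y_\tau)+\vec\alpha\cdot\Gamma_x-\epsilon$ for all $x\in\mathcal X$; here $\Gamma_x$ is the row of $\Gamma$ indexed by $x$. A matrix $\Gamma$ is admissible if its rows are pairwise distinct; it is $(\kappa,\delta)$-admissible if it is admissible, each column contains at most $\kappa$ distinct values, and any two distinct values in the same column differ by at least $\delta$. A distribution $D$ on $\mathbb R$ is $(\rho,L)$-dispersed if every interval of length $L$ has $D$-probability at most $\rho$. *)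

theory Defs
  imports "HOL-Probability.Probability"
begin

definition admissible :: "nat \<Rightarrow> ('x \<Rightarrow> nat \<Rightarrow> real) \<Rightarrow> bool" where
  "admissible N \<Gamma> \<longleftrightarrow> (\<forall>x x'. x \<noteq> x' \<longrightarrow> (\<exists>j<N. \<Gamma> x j \<noteq> \<Gamma> x' j))"

definition kd_admissible ::
  "nat \<Rightarrow> nat \<Rightarrow> real \<Rightarrow> ('x \<Rightarrow> nat \<Rightarrow> real) \<Rightarrow> bool" where
  "kd_admissible N \<kappa> \<delta> \<Gamma> \<longleftrightarrow>
     admissible N \<Gamma>
     \<and> (\<forall>j<N. card ((\<lambda>x. \<Gamma> x j) ` UNIV) \<le> \<kappa>)
     \<and> (\<forall>j<N. \<forall>x x'. \<Gamma> x j \<noteq> \<Gamma> x' j \<longrightarrow> \<bar>\<Gamma> x j - \<Gamma> x' j\<bar> \<ge> \<delta>)"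

text \<open>A distribution on the reals is (rho,L)-dispersed if every interval of length L
  has probability at most rho (closed intervals contain all others of the same length).\<close>

definition dispersed :: "real measure \<Rightarrow> real \<Rightarrow> real \<Rightarrow> bool" where
  "dispersed D \<rho> L \<longleftrightarrow> (\<forall>a. measure D {a..a + L} \<le> \<rho>)"

definition ftpl_choice ::
  "('x \<Rightarrow> 'y \<Rightarrow> real) \<Rightarrow> (nat \<Rightarrow> 'y) \<Rightarrow> nat \<Rightarrow> ('x \<Rightarrow> nat \<Rightarrow> real) \<Rightarrow> real
   \<Rightarrow> (nat \<Rightarrow> real) \<Rightarrow> nat \<Rightarrow> 'x \<Rightarrow> bool" where
  "ftpl_choice f y N \<Gamma> \<epsilon> \<alpha> t xt \<longleftrightarrow>
     (\<forall>x. (\<Sum>\<tau>\<in>{1..<t}. f xt (y \<tau>)) + (\<Sum>j<N. \<alpha> j * \<Gamma> xt j)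
          \<ge> (\<Sum>\<tau>\<in>{1..<t}. f x (y \<tau>)) + (\<Sum>j<N. \<alpha> j * \<Gamma> x j) - \<epsilon>)"

end

theory Submission
  imports Defs
begin

text \<open>Round \<open>t\<close> can contribute positive regret only if \<open>x\<^sub>t\<^sub>+\<^sub>1 \<noteq> x\<^sub>t\<close>, and then, by
  admissibility, some column \<open>j\<close> of \<open>\<Gamma>\<close> takes different values at the two actions. Fix all
  perturbations except \<open>\<alpha>\<^sub>j\<close>. Comparing the near-optimality of \<open>x\<^sub>t\<close> for one value \<open>a\<close> of
  \<open>\<alpha>\<^sub>j\<close> with that of \<open>x\<^sub>t\<^sub>+\<^sub>1\<close> for another value \<open>b\<close> shows
  \<open>(b - a)(\<Gamma>(x\<^sub>t, j) - \<Gamma>(x\<^sub>t\<^sub>+\<^sub>1, j)) \<le> 1 + 2\<epsilon>\<close>, because the two objectives differ only by one reward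
  in \<open>[0,1]\<close>. Since distinct entries of a column are \<open>\<delta>\<close> apart, the values of \<open>\<alpha>\<^sub>j\<close> for which
  column \<open>j\<close> moves away from a given value \<open>v\<close> in a given direction lie in an interval of
  length \<open>(1 + 2\<epsilon>)/\<delta>\<close>, an event of probability at most \<open>\<rho>\<close>. A union bound over the round,
  the column, its at most \<open>\<kappa>\<close> values and the two directions gives \<open>2TN\<kappa>\<rho>\<close>.\<close>

lemma emeasure_PiM_le_if_sections_le:
  fixes M :: "'i \<Rightarrow> 'a measure"
  assumes M: "\<And>i. prob_space (M i)" and I: "finite I" "j \<in> I"
    and A: "A \<in> sets (PiM I M)"
    and sections: "\<And>\<beta>. \<beta> \<in> space (PiM (I - {j}) M) \<Longrightarrow>
      emeasure (M j) {a \<in> space (M j). \<beta>(j := a) \<in> A} \<le> ennreal \<rho>"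
  shows "emeasure (PiM I M) A \<le> ennreal \<rho>"
proof -
  interpret product_prob_space M UNIV
    by (simp add: product_prob_space_def product_prob_space_axioms_def M
        product_sigma_finite_def prob_space_imp_sigma_finite)
  define J where "J = I - {j}"
  have I_eq: "I = insert j J" and J: "finite J" "j \<notin> J"
    using I by (auto simp: J_def)
  have "emeasure (PiM I M) A = (\<integral>\<^sup>+ \<alpha>. indicator A \<alpha> \<partial>PiM I M)"
    using A by simp
  also have "\<dots> = (\<integral>\<^sup>+ \<beta>. (\<integral>\<^sup>+ a. indicator A (\<beta>(j := a)) \<partial>M j) \<partial>PiM J M)"
    unfolding I_eq using A I_eq by (subst product_nn_integral_insert[OF J]) auto
  also have "\<dots> \<le> (\<integral>\<^sup>+ \<beta>. ennreal \<rho> \<partial>PiM J M)"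
  proof (rule nn_integral_mono)
    fix \<beta> assume \<beta>: "\<beta> \<in> space (PiM J M)"
    have "(\<lambda>a. \<beta>(j := a)) \<in> measurable (M j) (PiM I M)"
      unfolding I_eq using measurable_component_update[OF \<beta> J(2)] by simp
    then have "{a \<in> space (M j). \<beta>(j := a) \<in> A} \<in> sets (M j)"
      using measurable_sets[OF _ A] by (simp add: vimage_def Int_def conj_commute)
    moreover have "(\<integral>\<^sup>+ a. indicator A (\<beta>(j := a)) \<partial>M j)
        = (\<integral>\<^sup>+ a. indicator {a \<in> space (M j). \<beta>(j := a) \<in> A} a \<partial>M j)"
      by (intro nn_integral_cong) (auto simp: indicator_def)
    ultimately have "(\<integral>\<^sup>+ a. indicator A (\<beta>(j := a)) \<partial>M j) = emeasure (M j) {a \<in> space (M j). \<beta>(j := a) \<in> A}"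
      by simp
    also have "\<dots> \<le> ennreal \<rho>"
      using sections \<beta> by (simp add: J_def)
    finally show "(\<integral>\<^sup>+ a. indicator A (\<beta>(j := a)) \<partial>M j) \<le> ennreal \<rho>" .
  qed
  also have "\<dots> = ennreal \<rho>"
    using prob_space.emeasure_space_1[OF prob_space_PiM[of J M]] M by simp
  finally show ?thesis .
qed

lemma dispersed_nonneg: "prob_space D \<Longrightarrow> dispersed D \<rho> L \<Longrightarrow> 0 \<le> \<rho>"
  unfolding dispersed_def by (meson measure_nonneg order_trans)

lemma emeasure_le_if_dispersed:
  fixes D :: "real measure"
  assumes D: "prob_space D" "sets D = sets borel" and disp: "dispersed D \<rho> L"
    and diam: "\<And>a b. a \<in> S \<Longrightarrow> b \<in> S \<Longrightarrow> a - b \<le> L"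
  shows "emeasure D S \<le> ennreal \<rho>"
proof (cases "S \<in> sets D \<and> S \<noteq> {}")
  case False
  then show ?thesis by (auto simp: emeasure_notin_sets)
next
  case True
  interpret prob_space D by (rule D(1))
  obtain s where s: "s \<in> S" using True by auto
  have bdd: "bdd_below S"
    unfolding bdd_below_def using diam[OF s] by (metis diff_le_eq add.commute le_diff_eq)
  have "S \<subseteq> {Inf S .. Inf S + L}"
  proof
    fix a assume a: "a \<in> S"
    have "a - L \<le> Inf S"
      using True by (intro cInf_greatest) (auto dest: diam[OF a])
    then show "a \<in> {Inf S .. Inf S + L}" using cInf_lower[OF a bdd] by auto
  qed
  then have "emeasure D S \<le> emeasure D {Inf S .. Inf S + L}"
    by (rule emeasure_mono) (simp add: D(2))
  also have "\<dots> \<le> ennreal \<rho>"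
    using disp unfolding dispersed_def by (simp add: emeasure_eq_measure ennreal_leI)
  finally show ?thesis .
qed

lemma sum_fun_upd_mult:
  assumes "finite A" "j \<in> A"
  shows "(\<Sum>i\<in>A. (\<alpha>(j := a)) i * g i) = a * g j + (\<Sum>i\<in>A - {j}. \<alpha> i * g i)"
  using assms by (simp add: sum.remove)

lemma ftpl_choice_perturbation_stable:
  assumes f_range: "\<And>a b. 0 \<le> f a b \<and> f a b \<le> 1" and "1 \<le> t" "j < N"
    and z: "ftpl_choice f y N \<Gamma> \<epsilon> (\<alpha>(j := a)) t z"
    and z': "ftpl_choice f y N \<Gamma> \<epsilon> (\<alpha>(j := b)) (Suc t) z'"
  shows "(b - a) * (\<Gamma> z j - \<Gamma> z' j) \<le> 1 + 2 * \<epsilon>"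
proof -
  define S where "S w = (\<Sum>\<tau>\<in>{1..<t}. f w (y \<tau>))" for w
  define R where "R w = (\<Sum>i\<in>{..<N} - {j}. \<alpha> i * \<Gamma> w i)" for w
  have split: "(\<Sum>i<N. (\<alpha>(j := c)) i * \<Gamma> w i) = c * \<Gamma> w j + R w" for c w
    unfolding R_def using \<open>j < N\<close> by (intro sum_fun_upd_mult) auto
  have S_Suc: "(\<Sum>\<tau>\<in>{1..<Suc t}. f w (y \<tau>)) = S w + f w (y t)" for w
    unfolding S_def using \<open>1 \<le> t\<close> by (simp add: sum.atLeastLessThan_Suc)
  have "S z' + a * \<Gamma> z' j + R z' - \<epsilon> \<le> S z + a * \<Gamma> z j + R z"
    using z unfolding ftpl_choice_def split S_def by (metis add.assoc)
  moreover have "S z + f z (y t) + b * \<Gamma> z j + R z - \<epsilon> \<le> S z' + f z' (y t) + b * \<Gamma> z' j + R z'"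
    using z' unfolding ftpl_choice_def split S_Suc by (metis add.assoc)
  moreover have "0 \<le> f z (y t)" "f z' (y t) \<le> 1"
    using f_range by auto
  ultimately show ?thesis by (simp add: algebra_simps)
qed

lemma le_divide_if_mult_le:
  fixes c d K \<delta> :: real
  assumes "c * d \<le> K" "\<delta> \<le> d" "0 < \<delta>" "0 \<le> K"
  shows "c \<le> K / \<delta>"
proof (cases "c \<le> 0")
  case True
  moreover have "0 \<le> K / \<delta>" using assms by simp
  ultimately show ?thesis by linarith
next
  case False
  then have "c * \<delta> \<le> K" using assms by (smt (verit) mult_left_mono)
  then show ?thesis using assms by (simp add: pos_le_divide_eq)
qed

locale generalized_ftpl =
  fixes f :: "'x::finite \<Rightarrow> 'y \<Rightarrow> real" and y :: "nat \<Rightarrow> 'y" and N \<kappa> :: nat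
    and \<Gamma> :: "'x \<Rightarrow> nat \<Rightarrow> real" and \<delta> \<epsilon> \<rho> :: real and D :: "real measure"
  assumes f_range: "\<And>a b. 0 \<le> f a b \<and> f a b \<le> 1"
    and \<Gamma>_adm: "kd_admissible N \<kappa> \<delta> \<Gamma>"
    and \<delta>_pos: "\<delta> > 0" and \<epsilon>_nonneg: "\<epsilon> \<ge> 0"
    and D_prob: "prob_space D" and D_borel: "sets D = sets borel"
    and D_disp: "dispersed D \<rho> ((1 + 2 * \<epsilon>) / \<delta>)"
begin

abbreviation M :: "(nat \<Rightarrow> real) measure" where
  "M \<equiv> PiM {..<N} (\<lambda>_. D)"

sublocale P: prob_space M
  by (intro prob_space_PiM D_prob)

lemma \<rho>_nonneg: "0 \<le> \<rho>"
  using dispersed_nonneg[OF D_prob D_disp] .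

lemma measurable_component_borel: "i < N \<Longrightarrow> (\<lambda>\<alpha>. \<alpha> i) \<in> borel_measurable M"
  using measurable_component_singleton[of i "{..<N}" "\<lambda>_. D"] measurable_cong_sets[OF refl D_borel]
  by blast

lemma measurable_linear_form[measurable]: "(\<lambda>\<alpha>. \<Sum>j<N. \<alpha> j * c j) \<in> borel_measurable M"
  by (intro borel_measurable_sum borel_measurable_times measurable_component_borel
      borel_measurable_const) simp

lemma measurable_ftpl_choice[measurable]: "Measurable.pred M (\<lambda>\<alpha>. ftpl_choice f y N \<Gamma> \<epsilon> \<alpha> t z)"
proof -
  have "Measurable.pred M (\<lambda>\<alpha>. (\<Sum>\<tau>\<in>{1..<t}. f z' (y \<tau>)) + (\<Sum>j<N. \<alpha> j * \<Gamma> z' j) - \<epsilon>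
      \<le> (\<Sum>\<tau>\<in>{1..<t}. f z (y \<tau>)) + (\<Sum>j<N. \<alpha> j * \<Gamma> z j))" for z'
    unfolding pred_def by (intro borel_measurable_le borel_measurable_add borel_measurable_diff
        borel_measurable_const measurable_linear_form)
  then show ?thesis
    unfolding ftpl_choice_def by (intro pred_intros_countable)
qed

text \<open>The sign \<open>s \<in> {1, -1}\<close> is the direction in which column \<open>j\<close> moves away from \<open>v\<close>:
  down for \<open>s = 1\<close>, up for \<open>s = -1\<close>.\<close>

definition switch_event :: "real \<Rightarrow> nat \<Rightarrow> nat \<Rightarrow> real \<Rightarrow> (nat \<Rightarrow> real) set" where
  "switch_event s t j v = {\<alpha> \<in> space M.
     (\<exists>z. \<Gamma> z j = v \<and> ftpl_choice f y N \<Gamma> \<epsilon> \<alpha> t z) \<and>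
     (\<exists>z'. s * \<Gamma> z' j < s * v \<and> ftpl_choice f y N \<Gamma> \<epsilon> \<alpha> (Suc t) z')}"

lemma sets_switch_event: "switch_event s t j v \<in> sets M"
  unfolding switch_event_def by measurable

lemma switch_event_section_diameter:
  assumes s: "s \<in> {-1, 1}" and "1 \<le> t" "j < N"
    and a: "\<beta>(j := a) \<in> switch_event s t j v" and b: "\<beta>(j := b) \<in> switch_event s t j v"
  shows "s * (b - a) \<le> (1 + 2 * \<epsilon>) / \<delta>"
proof -
  obtain z where z: "\<Gamma> z j = v" "ftpl_choice f y N \<Gamma> \<epsilon> (\<beta>(j := a)) t z"
    using a unfolding switch_event_def by auto
  obtain z' where z': "s * \<Gamma> z' j < s * v" "ftpl_choice f y N \<Gamma> \<epsilon> (\<beta>(j := b)) (Suc t) z'"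
    using b unfolding switch_event_def by auto
  have "\<bar>v - \<Gamma> z' j\<bar> \<ge> \<delta>"
    using \<Gamma>_adm z z'(1) \<open>j < N\<close> unfolding kd_admissible_def by force
  then have gap: "\<delta> \<le> s * (v - \<Gamma> z' j)"
    using s z'(1) by (auto simp: algebra_simps)
  have "(b - a) * (v - \<Gamma> z' j) \<le> 1 + 2 * \<epsilon>"
    using ftpl_choice_perturbation_stable[OF f_range \<open>1 \<le> t\<close> \<open>j < N\<close> z(2) z'(2)] z(1) by simp
  moreover have "s * s = 1"
    using s by auto
  then have "(s * (b - a)) * (s * (v - \<Gamma> z' j)) = (b - a) * (v - \<Gamma> z' j)"
    by (metis (no_types, opaque_lifting) mult.assoc mult.left_commute mult_1)
  ultimately have "(s * (b - a)) * (s * (v - \<Gamma> z' j)) \<le> 1 + 2 * \<epsilon>"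
    by linarith
  then show ?thesis
    using gap \<delta>_pos \<epsilon>_nonneg by (intro le_divide_if_mult_le) auto
qed

lemma measure_switch_event_le:
  assumes "s \<in> {-1, 1}" "1 \<le> t" "j < N"
  shows "measure M (switch_event s t j v) \<le> \<rho>"
proof -
  have "emeasure M (switch_event s t j v) \<le> ennreal \<rho>"
  proof (rule emeasure_PiM_le_if_sections_le[OF D_prob _ _ sets_switch_event])
    fix \<beta>
    show "emeasure D {a \<in> space D. \<beta>(j := a) \<in> switch_event s t j v} \<le> ennreal \<rho>"
    proof (rule emeasure_le_if_dispersed[OF D_prob D_borel D_disp])
      fix a b
      assume "a \<in> {a \<in> space D. \<beta>(j := a) \<in> switch_event s t j v}"
        and "b \<in> {a \<in> space D. \<beta>(j := a) \<in> switch_event s t j v}"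
      then have "s * (b - a) \<le> (1 + 2 * \<epsilon>) / \<delta>" "s * (a - b) \<le> (1 + 2 * \<epsilon>) / \<delta>"
        using switch_event_section_diameter[OF assms] by auto
      then show "a - b \<le> (1 + 2 * \<epsilon>) / \<delta>"
        using \<open>s \<in> {-1, 1}\<close> by auto
    qed
  qed (use assms in auto)
  then show ?thesis
    using \<rho>_nonneg by (simp add: P.emeasure_eq_measure)
qed

lemma switch_event_if_column_changes:
  assumes "\<alpha> \<in> space M" "ftpl_choice f y N \<Gamma> \<epsilon> \<alpha> t z" "ftpl_choice f y N \<Gamma> \<epsilon> \<alpha> (Suc t) z'"
    and "\<Gamma> z' j \<noteq> \<Gamma> z j"
  shows "\<exists>s\<in>{-1, 1}. \<alpha> \<in> switch_event s t j (\<Gamma> z j)"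
proof (cases "\<Gamma> z' j < \<Gamma> z j")
  case True
  then have "\<alpha> \<in> switch_event 1 t j (\<Gamma> z j)"
    using assms unfolding switch_event_def by auto
  then show ?thesis by blast
next
  case False
  then have "\<alpha> \<in> switch_event (-1) t j (\<Gamma> z j)"
    using assms unfolding switch_event_def by force
  then show ?thesis by blast
qed

definition switch_count :: "nat \<Rightarrow> (nat \<Rightarrow> real) \<Rightarrow> real" where
  "switch_count T \<alpha> = (\<Sum>t\<in>{1..T}. \<Sum>j<N. \<Sum>v\<in>range (\<lambda>z. \<Gamma> z j). \<Sum>s\<in>{-1, 1}.
     indicator (switch_event s t j v) \<alpha>)"

lemma regret_le_switch_count:
  assumes \<alpha>: "\<alpha> \<in> space M"
    and x: "\<And>t. t \<in> {1..T + 1} \<Longrightarrow> ftpl_choice f y N \<Gamma> \<epsilon> \<alpha> t (x t)"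
  shows "(\<Sum>t = 1..T. f (x (t + 1)) (y t) - f (x t) (y t)) \<le> switch_count T \<alpha>"
  unfolding switch_count_def
proof (rule sum_mono)
  fix t assume t: "t \<in> {1..T}"
  show "f (x (t + 1)) (y t) - f (x t) (y t) \<le> (\<Sum>j<N. \<Sum>v\<in>range (\<lambda>z. \<Gamma> z j). \<Sum>s\<in>{-1, 1}.
      indicator (switch_event s t j v) \<alpha>)"
  proof (cases "x (t + 1) = x t")
    case True
    then show ?thesis by (simp add: sum_nonneg)
  next
    case False
    then obtain j where j: "j < N" "\<Gamma> (x (Suc t)) j \<noteq> \<Gamma> (x t) j"
      using \<Gamma>_adm unfolding kd_admissible_def admissible_def by (metis Suc_eq_plus1)
    obtain s where s: "s \<in> {-1, 1}" "\<alpha> \<in> switch_event s t j (\<Gamma> (x t) j)"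
      using switch_event_if_column_changes[OF \<alpha> x x j(2)] t by auto
    have "1 \<le> (\<Sum>s\<in>{-1, 1}. indicator (switch_event s t j (\<Gamma> (x t) j)) \<alpha> :: real)"
      using s by auto
    also have "\<dots> \<le> (\<Sum>v\<in>range (\<lambda>z. \<Gamma> z j). \<Sum>s\<in>{-1, 1}. indicator (switch_event s t j v) \<alpha>)"
      by (intro member_le_sum sum_nonneg) auto
    also have "\<dots> \<le> (\<Sum>j<N. \<Sum>v\<in>range (\<lambda>z. \<Gamma> z j). \<Sum>s\<in>{-1, 1}.
        indicator (switch_event s t j v) \<alpha>)"
      using j(1) by (intro member_le_sum sum_nonneg) auto
    finally show ?thesis
      using f_range[of "x (t + 1)" "y t"] f_range[of "x t" "y t"] by linarith
  qed
qed

lemma integrable_switch_count: "integrable M (switch_count T)"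
  unfolding switch_count_def
  by (simp add: sets_switch_event P.emeasure_finite less_top[symmetric])

lemma integral_switch_count_le: "integral\<^sup>L M (switch_count T) \<le> 2 * real T * real N * real \<kappa> * \<rho>"
proof -
  have "integral\<^sup>L M (switch_count T) = (\<Sum>t\<in>{1..T}. \<Sum>j<N. \<Sum>v\<in>range (\<lambda>z. \<Gamma> z j).
      \<Sum>s\<in>{-1, 1}. measure M (switch_event s t j v))"
    unfolding switch_count_def
    by (simp add: integral_sum integrable_sum sets_switch_event sets.Int_space_eq2
        P.emeasure_finite less_top[symmetric])
  also have "\<dots> \<le> (\<Sum>t\<in>{1..T}. \<Sum>j<N. \<Sum>v\<in>range (\<lambda>z. \<Gamma> z j). \<Sum>s\<in>{-1, 1::real}. \<rho>)"
    by (intro sum_mono measure_switch_event_le) auto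
  also have "\<dots> \<le> (\<Sum>t\<in>{1..T}. \<Sum>j<N. real \<kappa> * (2 * \<rho>))"
  proof (intro sum_mono)
    fix j assume "j \<in> {..<N}"
    then have "card (range (\<lambda>z. \<Gamma> z j)) \<le> \<kappa>"
      using \<Gamma>_adm unfolding kd_admissible_def by auto
    then show "(\<Sum>v\<in>range (\<lambda>z. \<Gamma> z j). \<Sum>s\<in>{-1, 1::real}. \<rho>) \<le> real \<kappa> * (2 * \<rho>)"
      using \<rho>_nonneg by (simp add: mult_right_mono)
  qed
  also have "\<dots> = 2 * real T * real N * real \<kappa> * \<rho>"
    by simp
  finally show ?thesis .
qed

end

theorem lemma2p2:
  fixes f :: "'x::finite \<Rightarrow> 'y \<Rightarrow> real"
    and y :: "nat \<Rightarrow> 'y"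
    and T N \<kappa> :: nat
    and \<Gamma> :: "'x \<Rightarrow> nat \<Rightarrow> real"
    and \<delta> \<epsilon> \<rho> :: real
    and D :: "real measure"
    and x :: "nat \<Rightarrow> (nat \<Rightarrow> real) \<Rightarrow> 'x"
  assumes f_range: "\<And>a b. 0 \<le> f a b \<and> f a b \<le> 1"
    and \<Gamma>_range: "\<And>a j. j < N \<Longrightarrow> 0 \<le> \<Gamma> a j \<and> \<Gamma> a j \<le> 1"
    and \<Gamma>_adm: "kd_admissible N \<kappa> \<delta> \<Gamma>"
    and \<delta>_pos: "\<delta> > 0"
    and \<epsilon>_nonneg: "\<epsilon> \<ge> 0"
    and D_prob: "prob_space D"
    and D_borel: "sets D = sets borel"
    and D_disp: "dispersed D \<rho> ((1 + 2 * \<epsilon>) / \<delta>)"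
    and x_ftpl: "\<And>\<alpha> t. t \<in> {1..T + 1} \<Longrightarrow> ftpl_choice f y N \<Gamma> \<epsilon> \<alpha> t (x t \<alpha>)"
  shows "(\<integral>\<alpha>. (\<Sum>t = 1..T. f (x (t + 1) \<alpha>) (y t) - f (x t \<alpha>) (y t))
            \<partial>(PiM {..<N} (\<lambda>_. D)))
         \<le> 2 * real T * real N * real \<kappa> * \<rho>"
proof -
  interpret generalized_ftpl f y N \<kappa> \<Gamma> \<delta> \<epsilon> \<rho> D
    unfolding generalized_ftpl_def
    using f_range \<Gamma>_adm \<delta>_pos \<epsilon>_nonneg D_prob D_borel D_disp by blast
  define regret where "regret = (\<lambda>\<alpha>. \<Sum>t = 1..T. f (x (t + 1) \<alpha>) (y t) - f (x t \<alpha>) (y t))"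
  show ?thesis
  proof (cases "integrable M regret")
    case True
    have "regret \<alpha> \<le> switch_count T \<alpha>" if "\<alpha> \<in> space M" for \<alpha>
      unfolding regret_def using that x_ftpl by (rule regret_le_switch_count)
    then have "integral\<^sup>L M regret \<le> integral\<^sup>L M (switch_count T)"
      by (intro integral_mono True integrable_switch_count)
    then show ?thesis
      using integral_switch_count_le[of T] unfolding regret_def by linarith
  next
    case False
    then show ?thesis
      using \<rho>_nonneg unfolding regret_def by (simp add: not_integrable_integral_eq)
  qed
qed

end
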